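(* Let $H=P_4$ (the path $1-2-3-4$) and let $G_1,G_2$ be graphs where $G_i$ is $d_i$-regular of order $n_i$ with adjacency eigenvalues $d_i=\lambda_1(A(G_i)),\dots,\lambda_{n_i}(A(G_i))$, $i=1,2$. Let $G=\bigvee_{P_4}\{G_1,G_2,G_2',G_1'\}$, where $G_1'$, $G_2'$ are disjoint copies of $G_1$, $G_2$ assigned to vertices $4$ and $3$ respectively, and let $s\in\mathbb{R}$. Set $$a(s)=s^2(d_1+n_2-1)-sd_1+1,\qquad b(s)=s^2(d_2+(n_1+n_2)-1)-sd_2+1,$$ $\sigma(M_1(s))=\{s^2(d_1+n_2-1)-s\lambda_k(A(G_1))+1\}_{k=1}^{n_1}$ and $\sigma(M_2(s))=\{s^2(d_2+n_1+n_2-1)-s\lambda_k(A(G_2))+1\}_{k=1}^{n_2}$. Then $$\sigma(M_G(s))=\big(\sigma(M_1(s))^{[2]}-\{a(s)^{[2]}\}\big)\cup\big(\sigma(M_2(s))^{[2]}-\{b(s)^{[2]}\}\big)\cup\sigma(F_4(s)),$$ where $X^{[2]}$ denotes the multiset $X$ with every multiplicity doubled, $\{a(s)^{[2]}\}$ denotes two copies of $a(s)$, and $$\sigma(F_4(s))=\Big\{\tfrac12\big(a(s)+b(s)+sn_2\pm\sqrt{(a(s)-b(s)-sn_2)^2+4s^2n_1n_2}\big),\ \tfrac12\big(a(s)+b(s)-sn_2\pm\sqrt{(a(s)-b(s)+sn_2)^2+4s^2n_1n_2}\big)\Big\}.$$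
   Context: For a simple undirected graph $G$ with adjacency matrix $A$, degree matrix $D$ and identity $I$, and real $s$, the deformed Laplacian matrix is $M_G(s)=I-sA+s^2(D-I)$; $\sigma(\cdot)$ is the multiset of eigenvalues. $H$-join: given a graph $H$ on vertex set $\{1,\dots,r\}$ and pairwise vertex-disjoint graphs $G_1,\dots,G_r$, $\bigvee_H\{G_i\}$ has vertex set $\bigcup_iV(G_i)$ and edges $\bigcup_iE(G_i)$ together with all edges $uv$, $u\in V(G_i)$, $v\in V(G_j)$, for each $ij\in E(H)$. *)

theory Defs
  imports Main "HOL-Combinatorics.Permutations" "HOL-Computational_Algebra.Polynomial"
    "HOL-Library.Multiset"
begin

definition simple_graph :: "'v set \<Rightarrow> ('v \<Rightarrow> 'v \<Rightarrow> bool) \<Rightarrow> bool" where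
  "simple_graph V E \<longleftrightarrow> finite V \<and> (\<forall>u v. E u v \<longrightarrow> u \<in> V \<and> v \<in> V)
     \<and> (\<forall>u v. E u v \<longrightarrow> E v u) \<and> (\<forall>v. \<not> E v v)"

definition degree :: "'v set \<Rightarrow> ('v \<Rightarrow> 'v \<Rightarrow> bool) \<Rightarrow> 'v \<Rightarrow> nat" where
  "degree V E v = card {u \<in> V. E v u}"

definition regular :: "'v set \<Rightarrow> ('v \<Rightarrow> 'v \<Rightarrow> bool) \<Rightarrow> nat \<Rightarrow> bool" where
  "regular V E d \<longleftrightarrow> (\<forall>v \<in> V. degree V E v = d)"

definition graph_iso :: "'v set \<Rightarrow> ('v \<Rightarrow> 'v \<Rightarrow> bool) \<Rightarrow> 'w set \<Rightarrow> ('w \<Rightarrow> 'w \<Rightarrow> bool) \<Rightarrow> bool" where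
  "graph_iso V E W F \<longleftrightarrow> (\<exists>f. bij_betw f V W \<and> (\<forall>u\<in>V. \<forall>v\<in>V. E u v \<longleftrightarrow> F (f u) (f v)))"

definition adj_matrix :: "('v \<Rightarrow> 'v \<Rightarrow> bool) \<Rightarrow> 'v \<Rightarrow> 'v \<Rightarrow> real" where
  "adj_matrix E u v = (if E u v then 1 else 0)"

definition deformed_laplacian :: "'v set \<Rightarrow> ('v \<Rightarrow> 'v \<Rightarrow> bool) \<Rightarrow> real \<Rightarrow> 'v \<Rightarrow> 'v \<Rightarrow> real" where
  "deformed_laplacian V E s u v =
     (if u = v then 1 else 0) - s * adj_matrix E u v
     + s^2 * (if u = v then real (degree V E u) - 1 else 0)"

definition det_on :: "'v set \<Rightarrow> ('v \<Rightarrow> 'v \<Rightarrow> 'a::comm_ring_1) \<Rightarrow> 'a" where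
  "det_on V M = (\<Sum>p | p permutes V. of_int (sign p) * (\<Prod>i\<in>V. M i (p i)))"

definition charpoly_on :: "'v set \<Rightarrow> ('v \<Rightarrow> 'v \<Rightarrow> real) \<Rightarrow> real poly" where
  "charpoly_on V M = det_on V (\<lambda>i j. (if i = j then [:0, 1:] else 0) - [:M i j:])"

text \<open>The multiset of eigenvalues (with algebraic multiplicity): the multiset of roots of
the characteristic polynomial, which splits for the real symmetric matrices considered.\<close>
definition spec_on :: "'v set \<Rightarrow> ('v \<Rightarrow> 'v \<Rightarrow> real) \<Rightarrow> real multiset" where
  "spec_on V M = (THE X. charpoly_on V M = (\<Prod>l\<in>#X. [:-l, 1:]))"

text \<open>H-join: H is a graph on {1..r} given by a symmetric relation on nat;
Gs i = (V_i, E_i) for i in {1..r}, pairwise vertex-disjoint.\<close>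
definition hjoin_V :: "nat \<Rightarrow> (nat \<Rightarrow> 'v set \<times> ('v \<Rightarrow> 'v \<Rightarrow> bool)) \<Rightarrow> 'v set" where
  "hjoin_V r Gs = (\<Union>i\<in>{1..r}. fst (Gs i))"

definition hjoin_E :: "nat \<Rightarrow> (nat \<Rightarrow> nat \<Rightarrow> bool) \<Rightarrow> (nat \<Rightarrow> 'v set \<times> ('v \<Rightarrow> 'v \<Rightarrow> bool))
     \<Rightarrow> 'v \<Rightarrow> 'v \<Rightarrow> bool" where
  "hjoin_E r H Gs u v \<longleftrightarrow> (\<exists>i\<in>{1..r}. snd (Gs i) u v)
     \<or> (\<exists>i\<in>{1..r}. \<exists>j\<in>{1..r}. H i j \<and> u \<in> fst (Gs i) \<and> v \<in> fst (Gs j))"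

definition P4 :: "nat \<Rightarrow> nat \<Rightarrow> bool" where
  "P4 i j \<longleftrightarrow> {i, j} \<in> {{1, 2}, {2, 3}, {3, 4}}"

end

theory Submission
  imports Defs "Jordan_Normal_Form.Char_Poly" "HOL-Computational_Algebra.Fundamental_Theorem_Algebra"
begin

text \<open>
  Let \<open>N(x) = x I - M\<^sub>G(s)\<close>. Since every \<open>G\<^sub>i\<close> is regular and each join edge set is complete
  bipartite, the partition of \<open>V(G)\<close> into the four blocks is equitable for \<open>N(x)\<close>: the sum of
  a row of block \<open>i\<close> over the columns of block \<open>j\<close> depends only on \<open>i\<close> and \<open>j\<close>. Column and row
  operations of determinant 1 then factor \<open>det N(x)\<close> into the determinant of the \<open>4 \<times> 4\<close>
  quotient matrix and one determinant per block; the same reduction applied to a single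
  block shows that the latter is \<open>det (x I - M\<^sub>i(s)) / (x - a\<^sub>i)\<close>, where \<open>a\<^sub>i\<close> is the eigenvalue of
  \<open>M\<^sub>i(s)\<close> on the all-ones vector. The quotient matrix of the \<open>P\<^sub>4\<close>-join is centrosymmetric,
  so its determinant is a product of two \<open>2 \<times> 2\<close> determinants, whose roots form \<open>\<sigma>(F\<^sub>4(s))\<close>.
\<close>

section \<open>Determinants over finite index sets\<close>

definition mat_mult_on :: "'v set \<Rightarrow> ('v \<Rightarrow> 'v \<Rightarrow> 'a::comm_ring_1) \<Rightarrow> ('v \<Rightarrow> 'v \<Rightarrow> 'a)
    \<Rightarrow> 'v \<Rightarrow> 'v \<Rightarrow> 'a" where
  "mat_mult_on V A B u w = (\<Sum>k\<in>V. A u k * B k w)"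

lemma det_on_cong:
  assumes "\<And>i j. i \<in> V \<Longrightarrow> j \<in> V \<Longrightarrow> M i j = N i j"
  shows "det_on V M = det_on V N"
  unfolding det_on_def
proof (rule sum.cong[OF refl])
  fix p assume "p \<in> {p. p permutes V}"
  then have "\<And>i. i \<in> V \<Longrightarrow> p i \<in> V" using permutes_in_image[of p V] by auto
  then show "of_int (sign p) * (\<Prod>i\<in>V. M i (p i)) = of_int (sign p) * (\<Prod>i\<in>V. N i (p i))"
    using assms by (auto intro!: prod.cong)
qed

lemma det_on_reindex:
  assumes g: "bij_betw g W V" and fin: "finite W"
  shows "det_on V M = det_on W (\<lambda>i j. M (g i) (g j))"
proof -
  let ?h = "map_permutation W g"
  have ginj: "inj_on g W" using g bij_betw_def by blast
  have bij: "bij_betw ?h {p. p permutes W} {p. p permutes V}"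
  proof (rule bij_betwI[where g="map_permutation V (inv_into W g)"])
    show "?h \<in> {p. p permutes W} \<rightarrow> {p. p permutes V}"
      using map_permutation_permutes[OF g] by auto
    show "map_permutation V (inv_into W g) \<in> {p. p permutes V} \<rightarrow> {p. p permutes W}"
      using map_permutation_permutes[OF bij_betw_inv_into[OF g]] by auto
    fix p assume "p \<in> {p. p permutes W}"
    then show "map_permutation V (inv_into W g) (?h p) = p"
      by (intro map_permutation_compose_inv[OF g]) (auto simp: ginj)
  next
    fix p assume "p \<in> {p. p permutes V}"
    then show "?h (map_permutation V (inv_into W g) p) = p"
      by (intro map_permutation_compose_inv[OF bij_betw_inv_into[OF g]])
         (use g in \<open>auto simp: bij_betw_inv_into_right\<close>)
  qed
  have "det_on V M = (\<Sum>q | q permutes W. of_int (sign (?h q)) * (\<Prod>v\<in>V. M v (?h q v)))"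
    unfolding det_on_def by (rule sum.reindex_bij_betw[OF bij, symmetric])
  also have "\<dots> = det_on W (\<lambda>i j. M (g i) (g j))"
    unfolding det_on_def
  proof (rule sum.cong[OF refl])
    fix q assume q: "q \<in> {p. p permutes W}"
    have "(\<Prod>v\<in>V. M v (?h q v)) = (\<Prod>i\<in>W. M (g i) (?h q (g i)))"
      by (rule prod.reindex_bij_betw[OF g, symmetric])
    also have "\<dots> = (\<Prod>i\<in>W. M (g i) (g (q i)))"
      by (rule prod.cong[OF refl]) (simp add: map_permutation_apply[OF ginj])
    moreover have "sign (?h q) = sign q"
      using sign_map_permutation[OF ginj _ fin] q by auto
    ultimately show "of_int (sign (?h q)) * (\<Prod>v\<in>V. M v (?h q v))
        = of_int (sign q) * (\<Prod>i\<in>W. M (g i) (g (q i)))"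
      by simp
  qed
  finally show ?thesis .
qed

lemma det_on_eq_det_mat:
  assumes "bij_betw g {0..<n} V"
  shows "det_on V M = det (mat n n (\<lambda>(i, j). M (g i) (g j)))"
  unfolding det_on_reindex[OF assms finite_atLeastLessThan]
  by (simp add: det_def det_on_def sign_def)

lemma det_on_mult:
  assumes fin: "finite V"
  shows "det_on V (mat_mult_on V A B) = det_on V A * det_on V B"
proof -
  obtain g where g: "bij_betw g {0..<card V} V"
    using ex_bij_betw_nat_finite[OF fin] by blast
  let ?n = "card V"
  let ?mat = "\<lambda>M. mat ?n ?n (\<lambda>(i, j). M (g i) (g j))"
  have "?mat (mat_mult_on V A B) = ?mat A * ?mat B"
  proof (rule eq_matI)
    fix i j assume "i < dim_row (?mat A * ?mat B)" "j < dim_col (?mat A * ?mat B)"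
    then have i: "i < ?n" and j: "j < ?n" by auto
    have "(?mat A * ?mat B) $$ (i, j) = (\<Sum>k\<in>{0..<?n}. A (g i) (g k) * B (g k) (g j))"
      using i j by (simp add: scalar_prod_def)
    also have "\<dots> = (\<Sum>k\<in>V. A (g i) k * B k (g j))"
      by (rule sum.reindex_bij_betw[OF g])
    finally show "?mat (mat_mult_on V A B) $$ (i, j) = (?mat A * ?mat B) $$ (i, j)"
      using i j by (simp add: mat_mult_on_def)
  qed auto
  then show ?thesis
    by (simp add: det_on_eq_det_mat[OF g] det_mult[of _ ?n])
qed

lemma det_on_unit_rows:
  assumes fin: "finite V" and S: "S \<subseteq> V"
    and unit: "\<And>u w. u \<in> V - S \<Longrightarrow> w \<in> V \<Longrightarrow> M u w = (if u = w then 1 else 0)"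
  shows "det_on V M = det_on S M"
proof -
  let ?f = "\<lambda>p. of_int (sign p) * (\<Prod>i\<in>V. M i (p i))"
  have sub: "{p. p permutes S} \<subseteq> {p. p permutes V}"
    using permutes_subset S by blast
  have "det_on V M = sum ?f {p. p permutes S}"
    unfolding det_on_def
  proof (rule sum.mono_neutral_right[OF finite_permutations[OF fin] sub], rule ballI)
    fix p assume p: "p \<in> {p. p permutes V} - {p. p permutes S}"
    then obtain u where u: "u \<notin> S" "p u \<noteq> u"
      unfolding permutes_def by blast
    have "u \<in> V" "p u \<in> V"
      using u p permutes_not_in permutes_in_image by (metis mem_Collect_eq DiffD1)+
    then have "M u (p u) = 0" using unit[of u "p u"] u by simp
    then have "(\<Prod>i\<in>V. M i (p i)) = 0" using \<open>u \<in> V\<close> by (intro prod_zero[OF fin]) blast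
    then show "?f p = 0" by simp
  qed
  also have "\<dots> = det_on S M"
    unfolding det_on_def
  proof (rule sum.cong[OF refl])
    fix p assume "p \<in> {p. p permutes S}"
    then have "(\<Prod>i\<in>V - S. M i (p i)) = 1"
      using unit permutes_not_in by (intro prod.neutral) fastforce
    then show "?f p = of_int (sign p) * (\<Prod>i\<in>S. M i (p i))"
      by (simp add: prod.subset_diff[OF S fin])
  qed
  finally show ?thesis .
qed

lemma det_on_empty [simp]: "det_on {} M = 1"
  unfolding det_on_def by simp

lemma det_on_singleton [simp]: "det_on {r} M = M r r"
  unfolding det_on_def by simp

lemma det_on_doubleton:
  assumes "p \<noteq> q"
  shows "det_on {p, q} M = M p p * M q q - M p q * M q p"
proof -
  let ?t = "Transposition.transpose p q"
  have "{f. f permutes {p, q}} = {id, ?t}"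
    by (auto simp: permutes_doubleton_iff)
  moreover have "id \<noteq> ?t"
    using assms by (metis id_apply transpose_apply_first)
  ultimately show ?thesis
    using assms by (simp add: det_on_def sign_swap_id)
qed

lemma det_on_identity:
  assumes "finite V"
  shows "det_on V (\<lambda>u w. if u = w then 1 else 0) = 1"
  by (subst det_on_unit_rows[OF assms, of "{}"]) auto

lemma det_on_scale:
  assumes "finite V"
  shows "det_on V (\<lambda>i j. k * M i j) = k ^ card V * det_on V M"
  unfolding det_on_def prod.distrib prod_constant sum_distrib_left
  by (rule sum.cong) auto

lemma det_on_block_triangular:
  assumes fin: "finite V" and R: "R \<subseteq> V"
    and zero: "\<And>u w. u \<in> V - R \<Longrightarrow> w \<in> R \<Longrightarrow> C u w = 0"
  shows "det_on V C = det_on R C * det_on (V - R) C"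
proof -
  define L where "L u w = (if u \<in> R then (if u = w then 1 else 0) else if w \<in> R then 0 else C u w)"
    for u w
  define U where "U u w = (if u \<in> R then C u w else if u = w then 1 else 0)" for u w
  have "mat_mult_on V L U u w = C u w" if "u \<in> V" "w \<in> V" for u w
  proof (cases "u \<in> R")
    case True
    have "mat_mult_on V L U u w = (\<Sum>k\<in>V. if k = u then U k w else 0)"
      unfolding mat_mult_on_def L_def using True by (intro sum.cong) auto
    then show ?thesis using that True fin by (simp add: U_def)
  next
    case False
    have "mat_mult_on V L U u w = (\<Sum>k\<in>V. if k = w then (if w \<in> R then 0 else C u w) else 0)"
      unfolding mat_mult_on_def L_def U_def using False by (intro sum.cong) auto
    then show ?thesis using that False fin zero[of u w] by auto
  qed
  then have "det_on V C = det_on V L * det_on V U"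
    by (simp add: det_on_mult[OF fin, symmetric] cong: det_on_cong)
  also have "det_on V L = det_on (V - R) C"
    by (subst det_on_unit_rows[OF fin, of "V - R"]) (auto simp: L_def intro: det_on_cong)
  also have "det_on V U = det_on R C"
    by (subst det_on_unit_rows[OF fin R]) (auto simp: U_def intro: det_on_cong)
  finally show ?thesis by (simp add: mult.commute)
qed

lemma det_on_block_diagonal:
  assumes "finite V" and "finite K" and "f ` V \<subseteq> K"
    and zero: "\<And>u w. u \<in> V \<Longrightarrow> w \<in> V \<Longrightarrow> f u \<noteq> f w \<Longrightarrow> C u w = 0"
  shows "det_on V C = (\<Prod>k\<in>K. det_on {v \<in> V. f v = k} C)"
  using assms(2,1,3) zero
proof (induction K arbitrary: V)
  case empty
  then show ?case by simp
next
  case (insert k K)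
  let ?B = "{v \<in> V. f v = k}"
  have "det_on V C = det_on ?B C * det_on (V - ?B) C"
    by (rule det_on_block_triangular) (use insert.prems in auto)
  also have "det_on (V - ?B) C = (\<Prod>j\<in>K. det_on {v \<in> V - ?B. f v = j} C)"
    by (rule insert.IH) (use insert.prems in auto)
  also have "\<dots> = (\<Prod>j\<in>K. det_on {v \<in> V. f v = j} C)"
    using insert.hyps by (intro prod.cong) (auto intro: arg_cong2[where f = det_on])
  finally show ?case using insert.hyps by simp
qed

lemma det_on_add_class_columns:
  fixes N :: "'v \<Rightarrow> 'v \<Rightarrow> 'a::comm_ring_1"
  assumes fin: "finite V" and R: "R \<subseteq> V"
    and \<rho>: "\<And>v. v \<in> V \<Longrightarrow> \<rho> v \<in> R" "\<And>r. r \<in> R \<Longrightarrow> \<rho> r = r"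
  shows "det_on V (\<lambda>u w. if w \<in> R then \<Sum>w'\<in>{w' \<in> V. \<rho> w' = w}. N u w' else N u w)
       = det_on V N"
proof -
  define P :: "'v \<Rightarrow> 'v \<Rightarrow> 'a"
    where "P k w = (if w \<in> R then (if \<rho> k = w then 1 else 0) else if k = w then 1 else 0)" for k w
  have "mat_mult_on V N P u w
      = (if w \<in> R then \<Sum>w'\<in>{w' \<in> V. \<rho> w' = w}. N u w' else N u w)" if "w \<in> V" for u w
  proof (cases "w \<in> R")
    case True
    then have "mat_mult_on V N P u w = (\<Sum>k\<in>V. if \<rho> k = w then N u k else 0)"
      unfolding mat_mult_on_def P_def by (intro sum.cong) auto
    then show ?thesis using True fin by (simp add: sum.inter_filter)
  next
    case False
    then have "mat_mult_on V N P u w = (\<Sum>k\<in>V. if k = w then N u w else 0)"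
      unfolding mat_mult_on_def P_def by (intro sum.cong) auto
    then show ?thesis using False that fin by simp
  qed
  then have "det_on V (\<lambda>u w. if w \<in> R then \<Sum>w'\<in>{w' \<in> V. \<rho> w' = w}. N u w' else N u w)
      = det_on V N * det_on V P"
    by (simp add: det_on_mult[OF fin, symmetric] cong: det_on_cong)
  also have "det_on V P = det_on (V - R) (\<lambda>u w. if u = w then 1 else 0)"
    by (subst det_on_unit_rows[OF fin, of "V - R"]) (use R \<rho> in \<open>auto simp: P_def intro: det_on_cong\<close>)
  finally show ?thesis using fin by (simp add: det_on_identity)
qed

lemma det_on_subtract_class_rows:
  fixes N :: "'v \<Rightarrow> 'v \<Rightarrow> 'a::comm_ring_1"
  assumes fin: "finite V" and R: "R \<subseteq> V" and \<rho>: "\<And>v. v \<in> V \<Longrightarrow> \<rho> v \<in> R"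
  shows "det_on V (\<lambda>u w. if u \<in> R then N u w else N u w - N (\<rho> u) w) = det_on V N"
proof -
  define Q :: "'v \<Rightarrow> 'v \<Rightarrow> 'a"
    where "Q u k = (if u = k then 1 else 0) - (if u \<notin> R \<and> k = \<rho> u then 1 else 0)" for u k
  have "mat_mult_on V Q N u w = (if u \<in> R then N u w else N u w - N (\<rho> u) w)" if "u \<in> V" for u w
  proof -
    have "mat_mult_on V Q N u w = (\<Sum>k\<in>V. (if k = u then N k w else 0)
        - (if u \<notin> R then if k = \<rho> u then N k w else 0 else 0))"
      unfolding mat_mult_on_def by (intro sum.cong) (auto simp: Q_def left_diff_distrib)
    then show ?thesis using that fin \<rho>[OF that] R by (auto simp: sum_subtractf)
  qed
  then have "det_on V (\<lambda>u w. if u \<in> R then N u w else N u w - N (\<rho> u) w) = det_on V Q * det_on V N"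
    by (simp add: det_on_mult[OF fin, symmetric] cong: det_on_cong)
  also have "det_on V Q = det_on (V - R) Q"
    by (rule det_on_unit_rows[OF fin]) (auto simp: Q_def)
  also have "\<dots> = det_on (V - R) (\<lambda>u w. if u = w then 1 else 0)"
    by (rule det_on_cong) (use \<rho> in \<open>auto simp: Q_def\<close>)
  finally show ?thesis using fin by (simp add: det_on_identity)
qed

lemma det_on_equitable_partition:
  fixes N :: "'v \<Rightarrow> 'v \<Rightarrow> 'a::comm_ring_1" and \<pi> :: "'v \<Rightarrow> 'i"
  assumes fin: "finite V" and \<pi>: "\<And>v. v \<in> V \<Longrightarrow> \<pi> v \<in> I"
    and rep: "\<And>i. i \<in> I \<Longrightarrow> rep i \<in> V" "\<And>i. i \<in> I \<Longrightarrow> \<pi> (rep i) = i"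
    and equitable: "\<And>u j. u \<in> V \<Longrightarrow> j \<in> I \<Longrightarrow>
       (\<Sum>w\<in>{w \<in> V. \<pi> w = j}. N u w) = (\<Sum>w\<in>{w \<in> V. \<pi> w = j}. N (rep (\<pi> u)) w)"
  shows "det_on V N = det_on I (\<lambda>i j. \<Sum>w\<in>{w \<in> V. \<pi> w = j}. N (rep i) w)
                      * det_on (V - rep ` I) (\<lambda>u w. N u w - N (rep (\<pi> u)) w)"
proof -
  let ?R = "rep ` I" and ?\<rho> = "\<lambda>v. rep (\<pi> v)"
  let ?S = "\<lambda>u r. \<Sum>w\<in>{w \<in> V. ?\<rho> w = r}. N u w"
  have R: "?R \<subseteq> V" using rep by auto
  have \<rho>: "\<And>v. v \<in> V \<Longrightarrow> ?\<rho> v \<in> ?R" "\<And>r. r \<in> ?R \<Longrightarrow> ?\<rho> r = r"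
    using \<pi> rep by auto
  have classes: "{w \<in> V. ?\<rho> w = rep j} = {w \<in> V. \<pi> w = j}" if "j \<in> I" for j
    using that \<pi> rep by (metis)
  define C1 where "C1 = (\<lambda>u w. if w \<in> ?R then ?S u w else N u w)"
  define C where "C = (\<lambda>u w. if u \<in> ?R then C1 u w else C1 u w - C1 (?\<rho> u) w)"
  have "det_on V N = det_on V C1"
    unfolding C1_def by (rule det_on_add_class_columns[OF fin R \<rho>, symmetric])
  also have "\<dots> = det_on V C"
    unfolding C_def by (rule det_on_subtract_class_rows[OF fin R \<rho>(1), symmetric])
  also have "\<dots> = det_on ?R C * det_on (V - ?R) C"
  proof (rule det_on_block_triangular[OF fin R])
    fix u w assume "u \<in> V - ?R" "w \<in> ?R"
    then show "C u w = 0"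
      using equitable[of u "\<pi> w"] classes[of "\<pi> w"] \<pi> rep by (auto simp: C_def C1_def)
  qed
  also have "det_on ?R C = det_on ?R ?S"
    by (rule det_on_cong) (simp add: C_def C1_def)
  also have "\<dots> = det_on I (\<lambda>i j. ?S (rep i) (rep j))"
  proof (rule det_on_reindex)
    show "bij_betw rep I ?R" using rep by (metis bij_betw_imageI inj_on_inverseI)
    have "I \<subseteq> \<pi> ` V" using rep by (metis image_eqI subsetI)
    then show "finite I" using fin finite_surj by blast
  qed
  also have "\<dots> = det_on I (\<lambda>i j. \<Sum>w\<in>{w \<in> V. \<pi> w = j}. N (rep i) w)"
    by (rule det_on_cong) (simp add: classes)
  also have "det_on (V - ?R) C = det_on (V - ?R) (\<lambda>u w. N u w - N (?\<rho> u) w)"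
    by (rule det_on_cong) (simp add: C_def C1_def)
  finally show ?thesis .
qed

lemma det_on_constant_row_sums:
  fixes N :: "'v \<Rightarrow> 'v \<Rightarrow> 'a::comm_ring_1"
  assumes "finite V" and "r \<in> V" and "\<And>u. u \<in> V \<Longrightarrow> (\<Sum>w\<in>V. N u w) = \<beta>"
  shows "det_on V N = \<beta> * det_on (V - {r}) (\<lambda>u w. N u w - N r w)"
  using det_on_equitable_partition[of V "\<lambda>_. ()" "{()}" "\<lambda>_. r" N] assms by simp

lemma det_on_centrosymmetric4:
  fixes M :: "nat \<Rightarrow> nat \<Rightarrow> 'a::comm_ring_1"
  assumes centro: "\<And>i j. i \<in> {1..4} \<Longrightarrow> j \<in> {1..4} \<Longrightarrow> M (5 - i) (5 - j) = M i j"
  shows "det_on {1..4} M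
    = ((M 1 1 + M 1 4) * (M 2 2 + M 2 3) - (M 1 2 + M 1 3) * (M 2 1 + M 2 4))
    * ((M 1 1 - M 1 4) * (M 2 2 - M 2 3) - (M 1 2 - M 1 3) * (M 2 1 - M 2 4))"
proof -
  \<comment> \<open>The partition \<open>{1, 4}, {2, 3}\<close> is equitable for every centrosymmetric matrix.\<close>
  define \<pi> :: "nat \<Rightarrow> nat" where "\<pi> i = (if i = 1 \<or> i = 4 then 1 else 2)" for i
  have \<pi>_values: "\<pi> 1 = 1" "\<pi> 2 = 2" "\<pi> 3 = 2" "\<pi> 4 = 1" by (simp_all add: \<pi>_def)
  have classes: "{w \<in> {1..4}. \<pi> w = 1} = {1, 4}" "{w \<in> {1..4}. \<pi> w = 2} = {2, 3}"
    by (auto simp: \<pi>_def)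
  have mirror: "M 4 1 = M 1 4" "M 4 4 = M 1 1" "M 4 2 = M 1 3" "M 4 3 = M 1 2"
    "M 3 1 = M 2 4" "M 3 4 = M 2 1" "M 3 2 = M 2 3" "M 3 3 = M 2 2"
    using centro[of 1 4] centro[of 1 1] centro[of 1 3] centro[of 1 2]
      centro[of 2 4] centro[of 2 1] centro[of 2 3] centro[of 2 2] by simp_all
  have row_sums: "\<forall>u\<in>{1..4}. (\<Sum>w\<in>{1, 4}. M u w) = (\<Sum>w\<in>{1, 4}. M (\<pi> u) w)
      \<and> (\<Sum>w\<in>{2, 3}. M u w) = (\<Sum>w\<in>{2, 3}. M (\<pi> u) w)"
  proof -
    have "{1..4::nat} = {1, 2, 3, 4}" by auto
    \<comment> \<open>\<open>One_nat_def\<close> would turn the index \<open>1\<close> into \<open>Suc 0\<close> and detach it from \<open>mirror\<close>.\<close>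
    then show ?thesis by (simp add: \<pi>_values mirror add.commute del: One_nat_def)
  qed
  have "det_on {1..4} M = det_on {1, 2} (\<lambda>i j. \<Sum>w\<in>{w \<in> {1..4}. \<pi> w = j}. M (id i) w)
      * det_on ({1..4} - id ` {1, 2}) (\<lambda>u w. M u w - M (id (\<pi> u)) w)"
  proof (rule det_on_equitable_partition)
    fix u j assume u: "u \<in> {1..4::nat}" and "j \<in> {1, 2::nat}"
    then consider "j = 1" | "j = 2" by blast
    then show "(\<Sum>w\<in>{w \<in> {1..4}. \<pi> w = j}. M u w)
        = (\<Sum>w\<in>{w \<in> {1..4}. \<pi> w = j}. M (id (\<pi> u)) w)"
    proof cases
      case 1
      show ?thesis unfolding 1 classes using row_sums u by simp
    next
      case 2
      show ?thesis unfolding 2 classes using row_sums u by simp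
    qed
  qed (auto simp: \<pi>_def)
  also have "det_on {1, 2} (\<lambda>i j. \<Sum>w\<in>{w \<in> {1..4}. \<pi> w = j}. M (id i) w)
      = (M 1 1 + M 1 4) * (M 2 2 + M 2 3) - (M 1 2 + M 1 3) * (M 2 1 + M 2 4)"
    by (subst det_on_doubleton) (simp_all only: classes id_apply, simp_all)
  also have "{1..4} - id ` {1, 2} = {3, 4::nat}" by auto
  also have "det_on {3, 4} (\<lambda>u w. M u w - M (id (\<pi> u)) w)
      = (M 1 1 - M 1 4) * (M 2 2 - M 2 3) - (M 1 2 - M 1 3) * (M 2 1 - M 2 4)"
    by (simp add: det_on_doubleton \<pi>_values mirror algebra_simps del: One_nat_def)
  finally show ?thesis .
qed

section \<open>Characteristic polynomials and spectra\<close>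

lemma poly_charpoly_on:
  "poly (charpoly_on V M) x = det_on V (\<lambda>i j. (if i = j then x else 0) - M i j)"
  unfolding charpoly_on_def det_on_def poly_sum poly_mult poly_prod poly_of_int
  by (intro sum.cong refl arg_cong2[where f = "(*)"] prod.cong) auto

lemma charpoly_on_eq_char_poly:
  assumes g: "bij_betw g {0..<n} V"
  shows "charpoly_on V A = char_poly (mat n n (\<lambda>(i, j). A (g i) (g j)))"
proof -
  have "g i = g j \<longleftrightarrow> i = j" if "i < n" "j < n" for i j
    using g that unfolding bij_betw_def inj_on_def by auto
  then show ?thesis
    unfolding charpoly_on_def char_poly_def char_poly_matrix_def det_on_eq_det_mat[OF g]
    by (intro arg_cong[where f = det] eq_matI) auto
qed

lemma proots_prod_linear_factors: "proots (\<Prod>l\<in>#X. [:-l, 1:]) = (X :: 'a::idom multiset)"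
proof (induction X)
  case (add x X)
  have "(\<Prod>l\<in>#X. [:-l, 1:]) \<noteq> 0" by auto
  then show ?case using add.IH by (simp add: proots_mult del: mult_pCons_left)
qed simp

lemma spec_on_eqI:
  assumes "charpoly_on V M = (\<Prod>l\<in>#X. [:-l, 1:])"
  shows "spec_on V M = X"
  unfolding spec_on_def
  by (rule the_equality) (use assms proots_prod_linear_factors in metis)+

lemma real_symmetric_eigenvalue_real:
  fixes B :: "real mat"
  assumes B: "B \<in> carrier_mat n n"
    and sym: "\<And>i j. i < n \<Longrightarrow> j < n \<Longrightarrow> B $$ (i, j) = B $$ (j, i)"
    and ev: "eigenvalue (map_mat complex_of_real B) a"
  shows "Im a = 0"
proof -
  obtain v where v: "v \<in> carrier_vec n" "v \<noteq> 0\<^sub>v n" "map_mat complex_of_real B *\<^sub>v v = a \<cdot>\<^sub>v v"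
    using ev B unfolding eigenvalue_def eigenvector_def by auto
  have row: "(\<Sum>j = 0..<n. of_real (B $$ (i, j)) * v $ j) = a * v $ i" if "i < n" for i
  proof -
    have "(map_mat complex_of_real B *\<^sub>v v) $ i = (a \<cdot>\<^sub>v v) $ i" by (simp only: v(3))
    then show ?thesis using that B v(1) by (simp add: scalar_prod_def mult.commute)
  qed
  define q where "q = (\<Sum>i = 0..<n. \<Sum>j = 0..<n. of_real (B $$ (i, j)) * cnj (v $ i) * v $ j)"
  define K where "K = (\<Sum>i = 0..<n. (Re (v $ i))\<^sup>2 + (Im (v $ i))\<^sup>2)"
  have q_eq: "q = a * of_real K"
  proof -
    have "q = (\<Sum>i = 0..<n. cnj (v $ i) * (\<Sum>j = 0..<n. of_real (B $$ (i, j)) * v $ j))"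
      unfolding q_def by (simp add: sum_distrib_left ac_simps)
    also have "\<dots> = (\<Sum>i = 0..<n. a * (v $ i * cnj (v $ i)))"
      by (intro sum.cong refl) (subst row, auto simp: ac_simps)
    finally show ?thesis
      unfolding K_def complex_mult_cnj by (simp add: sum_distrib_left)
  qed
  have "cnj q = (\<Sum>i = 0..<n. \<Sum>j = 0..<n. of_real (B $$ (j, i)) * cnj (v $ j) * v $ i)"
    unfolding q_def by (simp add: sym ac_simps)
  then have q_real: "cnj q = q"
    unfolding q_def by (subst sum.swap) simp
  obtain i where i: "i < n" "v $ i \<noteq> 0"
    using v(1,2) by (metis carrier_vecD eq_vecI index_zero_vec)
  have "0 < (Re (v $ i))\<^sup>2 + (Im (v $ i))\<^sup>2"
    using i(2) by (simp add: complex_eq_iff sum_power2_gt_zero_iff)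
  also have "\<dots> \<le> K"
    unfolding K_def by (rule member_le_sum) (use i in auto)
  finally have "K > 0" .
  moreover have "Im a * K = 0"
    using q_eq q_real by (simp add: complex_eq_iff)
  ultimately show ?thesis by simp
qed

lemma char_poly_real_symmetric_splits:
  fixes B :: "real mat"
  assumes B: "B \<in> carrier_mat n n"
    and sym: "\<And>i j. i < n \<Longrightarrow> j < n \<Longrightarrow> B $$ (i, j) = B $$ (j, i)"
  obtains es where "char_poly B = (\<Prod>e\<leftarrow>es. [:-e, 1:])"
proof -
  let ?C = "map_mat complex_of_real B"
  have C: "?C \<in> carrier_mat n n" using B by simp
  obtain as where "Polynomial.smult (lead_coeff (char_poly ?C)) (\<Prod>a\<leftarrow>as. [:-a, 1:]) = char_poly ?C"
    using fundamental_theorem_algebra_factorized by blast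
  then have as: "char_poly ?C = (\<Prod>a\<leftarrow>as. [:-a, 1:])"
    using degree_monic_char_poly[OF C] by simp
  have real: "Im a = 0" if "a \<in> set as" for a
  proof -
    have "poly (char_poly ?C) a = 0" unfolding as using that by (rule linear_poly_root)
    then show ?thesis
      using real_symmetric_eigenvalue_real[OF B sym] eigenvalue_root_char_poly[OF C] by simp
  qed
  have "poly (char_poly B) x = poly (\<Prod>a\<leftarrow>map Re as. [:-a, 1:]) x" for x
  proof -
    have "char_poly ?C = map_poly of_real (char_poly B)"
      using of_real_hom.char_poly_hom[OF B] by simp
    then have "complex_of_real (poly (char_poly B) x) = poly (char_poly ?C) (of_real x)"
      by simp
    also have "\<dots> = (\<Prod>a\<leftarrow>as. of_real x - a)"
      unfolding as poly_prod_list by (simp add: o_def)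
    also have "\<dots> = of_real (\<Prod>a\<leftarrow>as. x - Re a)"
      using real by (induction as) (auto simp: complex_eq_iff)
    finally show ?thesis
      unfolding poly_prod_list by (simp add: o_def)
  qed
  then show ?thesis
    using that poly_eq_poly_eq_iff by blast
qed

lemma charpoly_on_real_symmetric:
  fixes A :: "'v \<Rightarrow> 'v \<Rightarrow> real"
  assumes fin: "finite V" and sym: "\<And>i j. i \<in> V \<Longrightarrow> j \<in> V \<Longrightarrow> A i j = A j i"
  shows "charpoly_on V A = (\<Prod>l\<in>#spec_on V A. [:-l, 1:])" and "size (spec_on V A) = card V"
proof -
  obtain g where g: "bij_betw g {0..<card V} V"
    using ex_bij_betw_nat_finite[OF fin] by blast
  define B where "B = mat (card V) (card V) (\<lambda>(i, j). A (g i) (g j))"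
  have B: "B \<in> carrier_mat (card V) (card V)" unfolding B_def by simp
  have "B $$ (i, j) = B $$ (j, i)" if "i < card V" "j < card V" for i j
    using that bij_betwE[OF g] sym unfolding B_def by simp
  then obtain es where es: "char_poly B = (\<Prod>e\<leftarrow>es. [:-e, 1:])"
    using char_poly_real_symmetric_splits[OF B] by blast
  have cp: "charpoly_on V A = (\<Prod>l\<in>#mset es. [:-l, 1:])"
    using charpoly_on_eq_char_poly[OF g, of A] es unfolding B_def
    by (simp add: prod_mset_prod_list flip: mset_map)
  then show "charpoly_on V A = (\<Prod>l\<in>#spec_on V A. [:-l, 1:])"
    by (simp add: spec_on_eqI)
  have "length es = card V"
    using degree_monic_char_poly[OF B] es degree_linear_factors[of uminus es] by simp
  then show "size (spec_on V A) = card V"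
    using spec_on_eqI[OF cp] by simp
qed

lemma poly_charpoly_on_affine:
  fixes A :: "'v \<Rightarrow> 'v \<Rightarrow> real"
  assumes fin: "finite V" and sym: "\<And>i j. i \<in> V \<Longrightarrow> j \<in> V \<Longrightarrow> A i j = A j i"
  shows "poly (charpoly_on V (\<lambda>i j. (if i = j then c else 0) - s * A i j)) x
       = (\<Prod>l\<in>#spec_on V A. x - (c - s * l))"
proof (cases "s = 0")
  case True
  have "poly (charpoly_on V (\<lambda>i j. (if i = j then c else 0) - s * A i j)) x
      = det_on V (\<lambda>i j. (x - c) * (if i = j then 1 else 0))"
    unfolding poly_charpoly_on using True by (intro det_on_cong) auto
  also have "\<dots> = (x - c) ^ size (spec_on V A)"
    by (simp add: det_on_scale[OF fin] det_on_identity[OF fin] charpoly_on_real_symmetric(2)[OF fin sym])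
  finally show ?thesis using True by (simp add: prod_mset_constant)
next
  case False
  define y where "y = (c - x) / s"
  have "poly (charpoly_on V (\<lambda>i j. (if i = j then c else 0) - s * A i j)) x
      = det_on V (\<lambda>i j. (- s) * ((if i = j then y else 0) - A i j))"
    unfolding poly_charpoly_on y_def using False by (intro det_on_cong) (auto simp: field_simps)
  also have "\<dots> = (- s) ^ card V * poly (charpoly_on V A) y"
    unfolding poly_charpoly_on by (rule det_on_scale[OF fin])
  also have "\<dots> = (\<Prod>l\<in>#spec_on V A. - s) * (\<Prod>l\<in>#spec_on V A. y - l)"
    by (simp add: charpoly_on_real_symmetric[OF fin sym] poly_prod_mset)
  also have "\<dots> = (\<Prod>l\<in>#spec_on V A. (- s) * (y - l))"
    by (rule prod_mset.distrib[symmetric])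
  also have "\<dots> = (\<Prod>l\<in>#spec_on V A. x - (c - s * l))"
    unfolding y_def using False
    by (intro arg_cong[where f = prod_mset] image_mset_cong) (auto simp: field_simps)
  finally show ?thesis .
qed

lemma spec_on_eq_if_poly_mult:
  assumes "q \<noteq> 0" and "\<And>x. poly (charpoly_on V M) x * poly q x = (\<Prod>l\<in>#X. x - l) * poly q x"
  shows "spec_on V M = X"
proof (rule spec_on_eqI)
  have "poly (charpoly_on V M * q) = poly ((\<Prod>l\<in>#X. [:-l, 1:]) * q)"
    using assms(2) by (simp add: poly_prod_mset fun_eq_iff)
  then have "charpoly_on V M * q = (\<Prod>l\<in>#X. [:-l, 1:]) * q"
    by (simp only: poly_eq_poly_eq_iff)
  then show "charpoly_on V M = (\<Prod>l\<in>#X. [:-l, 1:])"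
    using assms(1) by simp
qed

lemma spec_on_cancel_trivial_eigenvalues:
  assumes "a \<in># X1" "b \<in># X2"
    and "\<And>x. poly (charpoly_on V M) x * ((x - a) * (x - b) * (x - b) * (x - a))
      = (\<Prod>l\<in>#S. x - l)
        * ((\<Prod>l\<in>#X1. x - l) * (\<Prod>l\<in>#X2. x - l) * (\<Prod>l\<in>#X2. x - l) * (\<Prod>l\<in>#X1. x - l))"
  shows "spec_on V M = ((X1 + X1) - {#a, a#}) + ((X2 + X2) - {#b, b#}) + S"
proof -
  obtain Y1 Y2 where Y1: "X1 = add_mset a Y1" and Y2: "X2 = add_mset b Y2"
    using assms(1,2) by (metis multi_member_split)
  let ?q = "[:-a, 1:] * [:-b, 1:] * [:-b, 1:] * [:-a, 1:]"
  have "poly ?q x = (x - a) * (x - b) * (x - b) * (x - a)" for x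
    by (simp only: poly_mult) simp
  then show ?thesis
    by (intro spec_on_eq_if_poly_mult[of ?q]) (use assms(3) in \<open>simp_all add: Y1 Y2 ac_simps\<close>)
qed

lemma adj_matrix_symmetric:
  assumes "simple_graph V E"
  shows "adj_matrix E u w = adj_matrix E w u"
  using assms by (auto simp: simple_graph_def adj_matrix_def)

lemma sum_adj_matrix:
  assumes "finite W"
  shows "(\<Sum>w\<in>W. adj_matrix E u w) = real (card {w \<in> W. E u w})"
  using assms by (simp add: adj_matrix_def sum.If_cases Int_def)

lemma regular_graph_iso:
  assumes iso: "graph_iso V E W F" and reg: "regular V E d"
  shows "regular W F d"
  unfolding regular_def
proof
  fix w assume "w \<in> W"
  obtain f where f: "bij_betw f V W" and edges: "\<forall>u\<in>V. \<forall>v\<in>V. E u v \<longleftrightarrow> F (f u) (f v)"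
    using iso unfolding graph_iso_def by blast
  then obtain u where u: "u \<in> V" "w = f u"
    using \<open>w \<in> W\<close> by (metis bij_betw_iff_bijections)
  have "{y \<in> W. F w y} = f ` {v \<in> V. E u v}"
    using u edges bij_betw_imp_surj_on[OF f] bij_betwE[OF f] by auto
  moreover have "inj_on f {v \<in> V. E u v}"
    using bij_betw_imp_inj_on[OF f] by (rule inj_on_subset) auto
  ultimately show "degree W F w = d"
    using reg u unfolding regular_def degree_def by (simp add: card_image)
qed

lemma spec_on_adj_matrix_graph_iso:
  assumes iso: "graph_iso V E W F" and fin: "finite V"
  shows "spec_on W (adj_matrix F) = spec_on V (adj_matrix E)"
proof -
  obtain f where f: "bij_betw f V W" and edges: "\<forall>u\<in>V. \<forall>v\<in>V. E u v \<longleftrightarrow> F (f u) (f v)"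
    using iso unfolding graph_iso_def by blast
  have "f u = f v \<longleftrightarrow> u = v" if "u \<in> V" "v \<in> V" for u v
    using f that unfolding bij_betw_def inj_on_def by auto
  then have "charpoly_on W (adj_matrix F) = charpoly_on V (adj_matrix E)"
    unfolding charpoly_on_def
    by (subst det_on_reindex[OF f fin], intro det_on_cong) (use edges in \<open>auto simp: adj_matrix_def\<close>)
  then show ?thesis unfolding spec_on_def by simp
qed

lemma degree_in_spec_adj_matrix:
  assumes G: "simple_graph V E" and "V \<noteq> {}" and reg: "regular V E d"
  shows "real d \<in># spec_on V (adj_matrix E)"
proof -
  have fin: "finite V" using G by (simp add: simple_graph_def)
  obtain r where "r \<in> V" using \<open>V \<noteq> {}\<close> by blast
  have "(\<Sum>w\<in>V. (if u = w then real d else 0) - adj_matrix E u w) = 0" if "u \<in> V" for u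
    using that reg fin by (simp add: sum_subtractf sum_adj_matrix regular_def degree_def)
  then have "poly (charpoly_on V (adj_matrix E)) (real d) = 0"
    unfolding poly_charpoly_on by (simp add: det_on_constant_row_sums[OF fin \<open>r \<in> V\<close>])
  then show ?thesis
    using adj_matrix_symmetric[OF G]
    by (auto simp: charpoly_on_real_symmetric(1)[OF fin] poly_prod_mset prod_mset_zero_iff)
qed

section \<open>Joins of regular graphs\<close>

locale regular_hjoin =
  fixes r :: nat and H :: "nat \<Rightarrow> nat \<Rightarrow> bool"
    and Gs :: "nat \<Rightarrow> 'v set \<times> ('v \<Rightarrow> 'v \<Rightarrow> bool)" and d :: "nat \<Rightarrow> nat" and s :: real
  assumes simple: "\<And>i. i \<in> {1..r} \<Longrightarrow> simple_graph (fst (Gs i)) (snd (Gs i))"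
    and nonempty: "\<And>i. i \<in> {1..r} \<Longrightarrow> fst (Gs i) \<noteq> {}"
    and regular: "\<And>i. i \<in> {1..r} \<Longrightarrow> regular (fst (Gs i)) (snd (Gs i)) (d i)"
    and disjoint: "\<And>i j. i \<in> {1..r} \<Longrightarrow> j \<in> {1..r} \<Longrightarrow> i \<noteq> j
      \<Longrightarrow> fst (Gs i) \<inter> fst (Gs j) = {}"
    and irreflexive: "\<And>i. \<not> H i i"
begin

abbreviation "V \<equiv> hjoin_V r Gs"
abbreviation "E \<equiv> hjoin_E r H Gs"

definition block_of :: "'v \<Rightarrow> nat" where
  "block_of v = (THE i. i \<in> {1..r} \<and> v \<in> fst (Gs i))"

definition outer_degree :: "nat \<Rightarrow> nat" where
  "outer_degree i = (\<Sum>j\<in>{j \<in> {1..r}. H i j}. card (fst (Gs j)))"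

text \<open>\<open>block_matrix i\<close> is the diagonal block of \<open>M\<^sub>G(s)\<close> on \<open>G\<^sub>i\<close> (the paper's \<open>M\<^sub>i(s)\<close>), and
  \<open>block_eigenvalue i\<close> its eigenvalue on the all-ones vector (\<open>a(s)\<close> and \<open>b(s)\<close> for \<open>P\<^sub>4\<close>).\<close>

definition block_matrix :: "nat \<Rightarrow> 'v \<Rightarrow> 'v \<Rightarrow> real" where
  "block_matrix i u w = (if u = w then 1 + s\<^sup>2 * (real (d i + outer_degree i) - 1) else 0)
     - s * adj_matrix (snd (Gs i)) u w"

definition block_eigenvalue :: "nat \<Rightarrow> real" where
  "block_eigenvalue i = 1 + s\<^sup>2 * (real (d i + outer_degree i) - 1) - s * real (d i)"

definition quotient_matrix :: "real \<Rightarrow> nat \<Rightarrow> nat \<Rightarrow> real" where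
  "quotient_matrix x i j = (if i = j then x - block_eigenvalue i else 0)
     + (if H i j then s * real (card (fst (Gs j))) else 0)"

definition char_matrix :: "real \<Rightarrow> 'v \<Rightarrow> 'v \<Rightarrow> real" where
  "char_matrix x u w = (if u = w then x else 0) - deformed_laplacian V E s u w"

lemma finite_block: "i \<in> {1..r} \<Longrightarrow> finite (fst (Gs i))"
  using simple by (simp add: simple_graph_def)

lemma finite_hjoin_V: "finite V"
  by (simp add: hjoin_V_def finite_block)

lemma block_of_eq: "i \<in> {1..r} \<Longrightarrow> v \<in> fst (Gs i) \<Longrightarrow> block_of v = i"
  unfolding block_of_def by (rule the_equality) (use disjoint in blast)+

lemma block_of_mem: "v \<in> V \<Longrightarrow> block_of v \<in> {1..r} \<and> v \<in> fst (Gs (block_of v))"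
  unfolding hjoin_V_def using block_of_eq by fastforce

lemma block_class: "j \<in> {1..r} \<Longrightarrow> {w \<in> V. block_of w = j} = fst (Gs j)"
  using block_of_eq block_of_mem by (auto simp: hjoin_V_def)

lemma hjoin_adjacent:
  assumes i: "i \<in> {1..r}" and j: "j \<in> {1..r}" and u: "u \<in> fst (Gs i)" and w: "w \<in> fst (Gs j)"
  shows "E u w \<longleftrightarrow> (if i = j then snd (Gs i) u w else H i j)"
proof -
  have u_block: "u \<in> fst (Gs k) \<longleftrightarrow> k = i" and w_block: "w \<in> fst (Gs k) \<longleftrightarrow> k = j"
    if "k \<in> {1..r}" for k
    using u w disjoint[OF that i] disjoint[OF that j] by blast+
  have "k = i \<and> k = j" if "k \<in> {1..r}" "snd (Gs k) u w" for k
    using simple[OF that(1)] that(2) u_block[OF that(1)] w_block[OF that(1)]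
    unfolding simple_graph_def by blast
  then have "(\<exists>k\<in>{1..r}. snd (Gs k) u w) \<longleftrightarrow> i = j \<and> snd (Gs i) u w"
    using i by blast
  moreover have "(\<exists>k\<in>{1..r}. \<exists>l\<in>{1..r}. H k l \<and> u \<in> fst (Gs k) \<and> w \<in> fst (Gs l)) \<longleftrightarrow> H i j"
    using u_block w_block i j by blast
  ultimately show ?thesis
    unfolding hjoin_E_def using irreflexive by auto
qed

lemma adj_matrix_block_sum:
  assumes i: "i \<in> {1..r}" and j: "j \<in> {1..r}" and u: "u \<in> fst (Gs i)"
  shows "(\<Sum>w\<in>fst (Gs j). adj_matrix E u w)
       = (if i = j then real (d i) else if H i j then real (card (fst (Gs j))) else 0)"
proof -
  have "(\<Sum>w\<in>fst (Gs j). adj_matrix E u w) = real (card {w \<in> fst (Gs j). E u w})"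
    by (rule sum_adj_matrix[OF finite_block[OF j]])
  also have "{w \<in> fst (Gs j). E u w}
      = (if i = j then {w \<in> fst (Gs i). snd (Gs i) u w} else if H i j then fst (Gs j) else {})"
    using hjoin_adjacent[OF i j u] by auto
  finally show ?thesis
    using regular[OF i] u by (cases "i = j") (simp_all add: regular_def degree_def)
qed

lemma degree_hjoin:
  assumes i: "i \<in> {1..r}" and u: "u \<in> fst (Gs i)"
  shows "degree V E u = d i + outer_degree i"
proof -
  have "real (degree V E u) = (\<Sum>w\<in>V. adj_matrix E u w)"
    by (simp add: degree_def sum_adj_matrix[OF finite_hjoin_V])
  also have "\<dots> = (\<Sum>j\<in>{1..r}. \<Sum>w\<in>fst (Gs j). adj_matrix E u w)"
    unfolding hjoin_V_def using disjoint finite_block by (intro sum.UNION_disjoint) auto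
  also have "\<dots> = (\<Sum>j\<in>{1..r}. (if i = j then real (d i) else 0)
      + (if H i j then real (card (fst (Gs j))) else 0))"
    using adj_matrix_block_sum[OF i _ u] irreflexive by (intro sum.cong) auto
  also have "\<dots> = real (d i + outer_degree i)"
    using i by (simp add: sum.distrib outer_degree_def sum.If_cases Int_def)
  finally show ?thesis by linarith
qed

lemma char_matrix_eq:
  assumes "i \<in> {1..r}" "u \<in> fst (Gs i)"
  shows "char_matrix x u w = (if u = w then x - 1 - s\<^sup>2 * (real (d i + outer_degree i) - 1) else 0)
    + s * adj_matrix E u w"
  using degree_hjoin[OF assms] by (cases "u = w") (simp_all add: char_matrix_def deformed_laplacian_def)

lemma char_matrix_within_block:
  assumes "i \<in> {1..r}" "u \<in> fst (Gs i)" "w \<in> fst (Gs i)"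
  shows "char_matrix x u w = (if u = w then x else 0) - block_matrix i u w"
  using char_matrix_eq[OF assms(1,2)] hjoin_adjacent[OF assms(1,1,2,3)]
  by (simp add: block_matrix_def adj_matrix_def)

lemma char_matrix_across_blocks:
  assumes "i \<in> {1..r}" "j \<in> {1..r}" "i \<noteq> j" "u \<in> fst (Gs i)" "w \<in> fst (Gs j)"
  shows "char_matrix x u w = (if H i j then s else 0)"
  using assms char_matrix_eq[OF assms(1,4)] hjoin_adjacent[OF assms(1,2,4,5)] disjoint[OF assms(1-3)]
  by (auto simp: adj_matrix_def)

lemma char_matrix_block_sum:
  assumes i: "i \<in> {1..r}" and j: "j \<in> {1..r}" and u: "u \<in> fst (Gs i)"
  shows "(\<Sum>w\<in>fst (Gs j). char_matrix x u w) = quotient_matrix x i j"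
proof -
  let ?c = "x - 1 - s\<^sup>2 * (real (d i + outer_degree i) - 1)"
  have "u \<in> fst (Gs j) \<longleftrightarrow> i = j" using u disjoint[OF i j] by blast
  then have "(\<Sum>w\<in>fst (Gs j). char_matrix x u w)
      = (if i = j then ?c else 0) + s * (\<Sum>w\<in>fst (Gs j). adj_matrix E u w)"
    by (simp add: char_matrix_eq[OF i u] sum.distrib sum_distrib_left finite_block[OF j])
  also have "\<dots> = quotient_matrix x i j"
    using irreflexive by (cases "i = j")
      (simp_all add: adj_matrix_block_sum[OF i j u] quotient_matrix_def block_eigenvalue_def algebra_simps)
  finally show ?thesis .
qed

lemma det_char_matrix:
  assumes rep: "\<And>i. i \<in> {1..r} \<Longrightarrow> rep i \<in> fst (Gs i)"
  shows "det_on V (char_matrix x) = det_on {1..r} (quotient_matrix x)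
    * (\<Prod>i\<in>{1..r}. det_on (fst (Gs i) - {rep i}) (\<lambda>u w. char_matrix x u w - char_matrix x (rep i) w))"
proof -
  let ?D = "\<lambda>u w. char_matrix x u w - char_matrix x (rep (block_of u)) w"
  have rep_V: "rep i \<in> V" "block_of (rep i) = i" if "i \<in> {1..r}" for i
    using rep[OF that] block_of_eq[OF that] that by (auto simp: hjoin_V_def)
  have row_sums: "(\<Sum>w\<in>{w \<in> V. block_of w = j}. char_matrix x u w) = quotient_matrix x (block_of u) j"
    if "u \<in> V" "j \<in> {1..r}" for u j
    using that block_of_mem[OF that(1)] by (simp add: block_class char_matrix_block_sum)
  have "det_on V (char_matrix x)
      = det_on {1..r} (\<lambda>i j. \<Sum>w\<in>{w \<in> V. block_of w = j}. char_matrix x (rep i) w)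
        * det_on (V - rep ` {1..r}) ?D"
  proof (rule det_on_equitable_partition[OF finite_hjoin_V])
    fix u j assume u: "u \<in> V" and j: "j \<in> {1..r}"
    then show "(\<Sum>w\<in>{w \<in> V. block_of w = j}. char_matrix x u w)
        = (\<Sum>w\<in>{w \<in> V. block_of w = j}. char_matrix x (rep (block_of u)) w)"
      using row_sums[OF u j] row_sums[OF rep_V(1) j] rep_V(2) block_of_mem[OF u] by simp
  qed (use block_of_mem rep_V in auto)
  also have "det_on {1..r} (\<lambda>i j. \<Sum>w\<in>{w \<in> V. block_of w = j}. char_matrix x (rep i) w)
      = det_on {1..r} (quotient_matrix x)"
    by (rule det_on_cong) (simp add: row_sums rep_V)
  also have "det_on (V - rep ` {1..r}) ?D
      = (\<Prod>i\<in>{1..r}. det_on {v \<in> V - rep ` {1..r}. block_of v = i} ?D)"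
  proof (rule det_on_block_diagonal)
    fix u w assume "u \<in> V - rep ` {1..r}" "w \<in> V - rep ` {1..r}" and ne: "block_of u \<noteq> block_of w"
    then have "block_of u \<in> {1..r}" "u \<in> fst (Gs (block_of u))"
      "block_of w \<in> {1..r}" "w \<in> fst (Gs (block_of w))"
      using block_of_mem by auto
    then show "?D u w = 0"
      using char_matrix_across_blocks[OF _ _ ne] rep by simp
  qed (use finite_hjoin_V block_of_mem in auto)
  also have "\<dots> = (\<Prod>i\<in>{1..r}.
      det_on (fst (Gs i) - {rep i}) (\<lambda>u w. char_matrix x u w - char_matrix x (rep i) w))"
  proof (rule prod.cong[OF refl])
    fix i assume i: "i \<in> {1..r}"
    have "v \<in> rep ` {1..r} \<longleftrightarrow> v = rep i" if "v \<in> fst (Gs i)" for v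
      using that i rep_V(2) block_of_eq[OF i] by force
    then have "{v \<in> V - rep ` {1..r}. block_of v = i} = fst (Gs i) - {rep i}"
      using block_class[OF i] by blast
    then show "det_on {v \<in> V - rep ` {1..r}. block_of v = i} ?D
        = det_on (fst (Gs i) - {rep i}) (\<lambda>u w. char_matrix x u w - char_matrix x (rep i) w)"
      using block_of_eq[OF i] by (auto intro: det_on_cong)
  qed
  finally show ?thesis .
qed

lemma poly_charpoly_block_matrix:
  assumes i: "i \<in> {1..r}" and r0: "r0 \<in> fst (Gs i)"
  shows "poly (charpoly_on (fst (Gs i)) (block_matrix i)) x
    = (x - block_eigenvalue i) * det_on (fst (Gs i) - {r0}) (\<lambda>u w. char_matrix x u w - char_matrix x r0 w)"
proof -
  have "poly (charpoly_on (fst (Gs i)) (block_matrix i)) x = det_on (fst (Gs i)) (char_matrix x)"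
    unfolding poly_charpoly_on by (rule det_on_cong) (simp add: char_matrix_within_block[OF i])
  also have "\<dots> = (x - block_eigenvalue i)
      * det_on (fst (Gs i) - {r0}) (\<lambda>u w. char_matrix x u w - char_matrix x r0 w)"
    by (rule det_on_constant_row_sums[OF finite_block[OF i] r0])
      (simp add: char_matrix_block_sum[OF i i] quotient_matrix_def irreflexive)
  finally show ?thesis .
qed

lemma poly_charpoly_block_matrix_spec:
  assumes i: "i \<in> {1..r}"
  shows "poly (charpoly_on (fst (Gs i)) (block_matrix i)) x
    = (\<Prod>l\<in>#spec_on (fst (Gs i)) (adj_matrix (snd (Gs i))).
         x - (1 + s\<^sup>2 * (real (d i + outer_degree i) - 1) - s * l))"
proof -
  have "block_matrix i = (\<lambda>u w. (if u = w then 1 + s\<^sup>2 * (real (d i + outer_degree i) - 1) else 0)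
      - s * adj_matrix (snd (Gs i)) u w)"
    by (simp add: block_matrix_def fun_eq_iff)
  then show ?thesis
    using poly_charpoly_on_affine[OF finite_block[OF i] adj_matrix_symmetric[OF simple[OF i]]] by simp
qed

theorem poly_charpoly_hjoin:
  "poly (charpoly_on V (deformed_laplacian V E s)) x * (\<Prod>i\<in>{1..r}. x - block_eigenvalue i)
   = det_on {1..r} (quotient_matrix x) * (\<Prod>i\<in>{1..r}. poly (charpoly_on (fst (Gs i)) (block_matrix i)) x)"
proof -
  define rep where "rep i = (SOME v. v \<in> fst (Gs i))" for i
  have rep: "rep i \<in> fst (Gs i)" if "i \<in> {1..r}" for i
    using nonempty[OF that] by (simp add: rep_def some_in_eq)
  have "poly (charpoly_on V (deformed_laplacian V E s)) x = det_on V (char_matrix x)"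
    unfolding poly_charpoly_on by (rule det_on_cong) (simp add: char_matrix_def)
  moreover have "(\<Prod>i\<in>{1..r}. poly (charpoly_on (fst (Gs i)) (block_matrix i)) x)
      = (\<Prod>i\<in>{1..r}. (x - block_eigenvalue i)
          * det_on (fst (Gs i) - {rep i}) (\<lambda>u w. char_matrix x u w - char_matrix x (rep i) w))"
    by (rule prod.cong[OF refl]) (rule poly_charpoly_block_matrix[OF _ rep])
  ultimately show ?thesis
    using det_char_matrix[OF rep] by (simp only: prod.distrib ac_simps)
qed

end

section \<open>The join over the path \<open>P\<^sub>4\<close>\<close>

lemma quadratic_factorization:
  fixes x A D :: real
  assumes "D \<ge> 0"
  shows "(x - (A + sqrt D) / 2) * (x - (A - sqrt D) / 2) = x\<^sup>2 - A * x + (A\<^sup>2 - D) / 4"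
proof -
  have "sqrt D ^ 2 = D" using assms by simp
  then show ?thesis by (simp add: field_simps power2_eq_square)
qed

lemma prod_mset_P4_quotient_roots:
  fixes a b s n1 n2 x :: real
  assumes "0 \<le> n1" "0 \<le> n2"
  shows "(\<Prod>l\<in>#{# (a + b + s * n2 + sqrt ((a - b - s * n2)^2 + 4 * s^2 * n1 * n2)) / 2,
                  (a + b + s * n2 - sqrt ((a - b - s * n2)^2 + 4 * s^2 * n1 * n2)) / 2,
                  (a + b - s * n2 + sqrt ((a - b + s * n2)^2 + 4 * s^2 * n1 * n2)) / 2,
                  (a + b - s * n2 - sqrt ((a - b + s * n2)^2 + 4 * s^2 * n1 * n2)) / 2 #}. x - l)
    = ((x - a) * (x - b + s * n2) - s * n2 * (s * n1)) * ((x - a) * (x - b - s * n2) - s * n2 * (s * n1))"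
proof -
  let ?A1 = "a + b + s * n2" and ?D1 = "(a - b - s * n2)\<^sup>2 + 4 * s\<^sup>2 * n1 * n2"
  let ?A2 = "a + b - s * n2" and ?D2 = "(a - b + s * n2)\<^sup>2 + 4 * s\<^sup>2 * n1 * n2"
  have D: "0 \<le> ?D1" "0 \<le> ?D2" using assms by simp_all
  have q1: "(x - (?A1 + sqrt ?D1) / 2) * (x - (?A1 - sqrt ?D1) / 2)
      = (x - a) * (x - b - s * n2) - s * n2 * (s * n1)"
    unfolding quadratic_factorization[OF D(1)] by (simp add: power2_eq_square field_simps)
  have q2: "(x - (?A2 + sqrt ?D2) / 2) * (x - (?A2 - sqrt ?D2) / 2)
      = (x - a) * (x - b + s * n2) - s * n2 * (s * n1)"
    unfolding quadratic_factorization[OF D(2)] by (simp add: power2_eq_square field_simps)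
  have "(\<Prod>l\<in>#{# (?A1 + sqrt ?D1) / 2, (?A1 - sqrt ?D1) / 2, (?A2 + sqrt ?D2) / 2,
      (?A2 - sqrt ?D2) / 2 #}. x - l)
    = ((x - (?A1 + sqrt ?D1) / 2) * (x - (?A1 - sqrt ?D1) / 2))
      * ((x - (?A2 + sqrt ?D2) / 2) * (x - (?A2 - sqrt ?D2) / 2))"
    by (simp add: mult.assoc)
  then show ?thesis unfolding q1 q2 by (simp only: mult.commute)
qed

lemma P4_iff:
  "P4 i j \<longleftrightarrow> (i = 1 \<and> j = 2) \<or> (i = 2 \<and> j = 1) \<or> (i = 2 \<and> j = 3) \<or> (i = 3 \<and> j = 2)
     \<or> (i = 3 \<and> j = 4) \<or> (i = 4 \<and> j = 3)"
  unfolding P4_def by (auto simp: doubleton_eq_iff)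

lemma P4_neighbours:
  "{j \<in> {1..4}. P4 1 j} = {2}" "{j \<in> {1..4}. P4 2 j} = {1, 3}"
  "{j \<in> {1..4}. P4 3 j} = {2, 4}" "{j \<in> {1..4}. P4 4 j} = {3}"
  by (auto simp: P4_iff)

locale regular_P4_join =
  fixes V1 V2 V3 V4 :: "'v set"
    and E1 E2 E3 E4 :: "'v \<Rightarrow> 'v \<Rightarrow> bool"
    and d1 d2 :: nat and s :: real
  assumes g1: "simple_graph V1 E1" and g2: "simple_graph V2 E2"
    and g3: "simple_graph V3 E3" and g4: "simple_graph V4 E4"
    and ne1: "V1 \<noteq> {}" and ne2: "V2 \<noteq> {}"
    and reg1: "regular V1 E1 d1" and reg2: "regular V2 E2 d2"
    and copy3: "graph_iso V2 E2 V3 E3" and copy4: "graph_iso V1 E1 V4 E4"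
    and disj: "V1 \<inter> V2 = {}" "V1 \<inter> V3 = {}" "V1 \<inter> V4 = {}"
      "V2 \<inter> V3 = {}" "V2 \<inter> V4 = {}" "V3 \<inter> V4 = {}"
begin

abbreviation "Gs \<equiv> \<lambda>i::nat. if i = 1 then (V1, E1) else if i = 2 then (V2, E2)
   else if i = 3 then (V3, E3) else (V4, E4)"
abbreviation "degrees \<equiv> \<lambda>i::nat. if i = 1 \<or> i = 4 then d1 else d2"

abbreviation "n1 \<equiv> real (card V1)"
abbreviation "n2 \<equiv> real (card V2)"
abbreviation "a \<equiv> s^2 * (real d1 + n2 - 1) - s * real d1 + 1"
abbreviation "b \<equiv> s^2 * (real d2 + (n1 + n2) - 1) - s * real d2 + 1"
abbreviation "\<sigma>M1 \<equiv> image_mset (\<lambda>l. s^2 * (real d1 + n2 - 1) - s * l + 1)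
  (spec_on V1 (adj_matrix E1))"
abbreviation "\<sigma>M2 \<equiv> image_mset (\<lambda>l. s^2 * (real d2 + n1 + n2 - 1) - s * l + 1)
  (spec_on V2 (adj_matrix E2))"
abbreviation "\<sigma>F4 \<equiv> {# (a + b + s * n2 + sqrt ((a - b - s * n2)^2 + 4 * s^2 * n1 * n2)) / 2,
                  (a + b + s * n2 - sqrt ((a - b - s * n2)^2 + 4 * s^2 * n1 * n2)) / 2,
                  (a + b - s * n2 + sqrt ((a - b + s * n2)^2 + 4 * s^2 * n1 * n2)) / 2,
                  (a + b - s * n2 - sqrt ((a - b + s * n2)^2 + 4 * s^2 * n1 * n2)) / 2 #}"

lemma finite_V1: "finite V1" and finite_V2: "finite V2"
  using g1 g2 by (simp_all add: simple_graph_def)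

lemma card_copies: "card V3 = card V2" "card V4 = card V1"
  using copy3 copy4 unfolding graph_iso_def by (metis bij_betw_same_card)+

lemma reg3: "regular V3 E3 d2" and reg4: "regular V4 E4 d1"
  using regular_graph_iso[OF copy3 reg2] regular_graph_iso[OF copy4 reg1] .

sublocale regular_hjoin 4 P4 Gs degrees s
proof
  fix i assume "i \<in> {1..4::nat}"
  then show "simple_graph (fst (Gs i)) (snd (Gs i))" "regular (fst (Gs i)) (snd (Gs i)) (degrees i)"
    using g1 g2 g3 g4 reg1 reg2 reg3 reg4 by auto
  show "fst (Gs i) \<noteq> {}"
    using ne1 ne2 card_copies finite_V1 finite_V2 by (auto simp flip: card_0_eq)
next
  fix i j assume "i \<in> {1..4::nat}" "j \<in> {1..4::nat}" "i \<noteq> j"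
  then show "fst (Gs i) \<inter> fst (Gs j) = {}"
    using disj by (auto simp: Int_commute)
qed (simp add: P4_iff)

lemma outer_degree_P4:
  "outer_degree 1 = card V2" "outer_degree 2 = card V1 + card V2"
  "outer_degree 3 = card V1 + card V2" "outer_degree 4 = card V2"
  unfolding outer_degree_def P4_neighbours by (simp_all add: card_copies)

lemma block_eigenvalue_P4:
  "block_eigenvalue 1 = a" "block_eigenvalue 2 = b" "block_eigenvalue 3 = b" "block_eigenvalue 4 = a"
  unfolding block_eigenvalue_def outer_degree_P4 by (simp_all add: algebra_simps)

lemma det_quotient_matrix_P4: "det_on {1..4} (quotient_matrix x) = (\<Prod>l\<in>#\<sigma>F4. x - l)"
proof -
  have centro: "quotient_matrix x (5 - i) (5 - j) = quotient_matrix x i j"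
    if "i \<in> {1..4}" "j \<in> {1..4}" for i j
  proof -
    have "{1..4::nat} = {1, 2, 3, 4}" by auto
    moreover have "\<forall>i\<in>{1, 2, 3, 4}. \<forall>j\<in>{1, 2, 3, 4}.
        quotient_matrix x (5 - i) (5 - j) = quotient_matrix x i j"
      \<comment> \<open>\<open>5 - 4\<close> evaluates to \<open>Suc 0\<close>, hence the reversed \<open>One_nat_def\<close>.\<close>
      by (simp add: quotient_matrix_def block_eigenvalue_P4 P4_iff card_copies One_nat_def[symmetric]
          del: One_nat_def)
    ultimately show ?thesis using that by blast
  qed
  have "det_on {1..4} (quotient_matrix x)
      = ((x - a) * (x - b + s * n2) - s * n2 * (s * n1)) * ((x - a) * (x - b - s * n2) - s * n2 * (s * n1))"
    by (subst det_on_centrosymmetric4[of "quotient_matrix x", OF centro])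
      (simp_all add: quotient_matrix_def block_eigenvalue_P4 P4_iff card_copies del: One_nat_def)
  also have "\<dots> = (\<Prod>l\<in>#\<sigma>F4. x - l)"
    by (rule prod_mset_P4_quotient_roots[symmetric]) simp_all
  finally show ?thesis .
qed

lemma poly_charpoly_block_matrix_P4:
  "poly (charpoly_on (fst (Gs 1)) (block_matrix 1)) x = (\<Prod>\<mu>\<in>#\<sigma>M1. x - \<mu>)"
  "poly (charpoly_on (fst (Gs 2)) (block_matrix 2)) x = (\<Prod>\<mu>\<in>#\<sigma>M2. x - \<mu>)"
  "poly (charpoly_on (fst (Gs 3)) (block_matrix 3)) x = (\<Prod>\<mu>\<in>#\<sigma>M2. x - \<mu>)"
  "poly (charpoly_on (fst (Gs 4)) (block_matrix 4)) x = (\<Prod>\<mu>\<in>#\<sigma>M1. x - \<mu>)"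
  using poly_charpoly_block_matrix_spec[of 1 x] poly_charpoly_block_matrix_spec[of 2 x]
    poly_charpoly_block_matrix_spec[of 3 x] poly_charpoly_block_matrix_spec[of 4 x]
  by (simp_all add: outer_degree_P4 spec_on_adj_matrix_graph_iso[OF copy3 finite_V2]
      spec_on_adj_matrix_graph_iso[OF copy4 finite_V1] image_mset.compositionality comp_def
      algebra_simps del: One_nat_def)

lemma block_eigenvalues_in_spectra: "a \<in># \<sigma>M1" "b \<in># \<sigma>M2"
  unfolding in_image_mset
  by (rule rev_image_eqI[OF degree_in_spec_adj_matrix[OF g1 ne1 reg1]], simp)
    (rule rev_image_eqI[OF degree_in_spec_adj_matrix[OF g2 ne2 reg2]], simp add: add.assoc)

theorem spec_deformed_laplacian_P4_join:
  "spec_on V (deformed_laplacian V E s) = ((\<sigma>M1 + \<sigma>M1) - {#a, a#}) + ((\<sigma>M2 + \<sigma>M2) - {#b, b#}) + \<sigma>F4"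
proof (rule spec_on_cancel_trivial_eigenvalues[OF block_eigenvalues_in_spectra])
  have "{1..4::nat} = {1, 2, 3, 4}" by auto
  then have prod4: "(\<Prod>i\<in>{1..4::nat}. f i) = f 1 * f 2 * f 3 * f 4" for f :: "nat \<Rightarrow> real"
    by (simp add: mult.assoc del: One_nat_def)
  fix x
  show "poly (charpoly_on V (deformed_laplacian V E s)) x * ((x - a) * (x - b) * (x - b) * (x - a))
      = (\<Prod>l\<in>#\<sigma>F4. x - l)
        * ((\<Prod>l\<in>#\<sigma>M1. x - l) * (\<Prod>l\<in>#\<sigma>M2. x - l) * (\<Prod>l\<in>#\<sigma>M2. x - l) * (\<Prod>l\<in>#\<sigma>M1. x - l))"
    using poly_charpoly_hjoin[of x]
    unfolding prod4 block_eigenvalue_P4 det_quotient_matrix_P4 poly_charpoly_block_matrix_P4 .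
qed

end

theorem mainTheorem12:
  fixes V1 V2 V3 V4 :: "'v set"
    and E1 E2 E3 E4 :: "'v \<Rightarrow> 'v \<Rightarrow> bool"
    and d1 d2 :: nat and s :: real
  assumes g1: "simple_graph V1 E1" and g2: "simple_graph V2 E2"
    and g3: "simple_graph V3 E3" and g4: "simple_graph V4 E4"
    and ne1: "V1 \<noteq> {}" and ne2: "V2 \<noteq> {}"
    and reg1: "regular V1 E1 d1" and reg2: "regular V2 E2 d2"
    and copy3: "graph_iso V2 E2 V3 E3" and copy4: "graph_iso V1 E1 V4 E4"
    and disj: "V1 \<inter> V2 = {}" "V1 \<inter> V3 = {}" "V1 \<inter> V4 = {}"
      "V2 \<inter> V3 = {}" "V2 \<inter> V4 = {}" "V3 \<inter> V4 = {}"
  shows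
    "let Gs = (\<lambda>i::nat. if i = 1 then (V1, E1) else if i = 2 then (V2, E2)
                         else if i = 3 then (V3, E3) else (V4, E4));
         V = hjoin_V 4 Gs; E = hjoin_E 4 P4 Gs;
         n1 = real (card V1); n2 = real (card V2);
         a = s^2 * (real d1 + n2 - 1) - s * real d1 + 1;
         b = s^2 * (real d2 + (n1 + n2) - 1) - s * real d2 + 1;
         \<sigma>M1 = image_mset (\<lambda>l. s^2 * (real d1 + n2 - 1) - s * l + 1)
                  (spec_on V1 (adj_matrix E1));
         \<sigma>M2 = image_mset (\<lambda>l. s^2 * (real d2 + n1 + n2 - 1) - s * l + 1)
                  (spec_on V2 (adj_matrix E2));
         \<sigma>F4 = {# (a + b + s * n2 + sqrt ((a - b - s * n2)^2 + 4 * s^2 * n1 * n2)) / 2,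
                  (a + b + s * n2 - sqrt ((a - b - s * n2)^2 + 4 * s^2 * n1 * n2)) / 2,
                  (a + b - s * n2 + sqrt ((a - b + s * n2)^2 + 4 * s^2 * n1 * n2)) / 2,
                  (a + b - s * n2 - sqrt ((a - b + s * n2)^2 + 4 * s^2 * n1 * n2)) / 2 #}
     in spec_on V (deformed_laplacian V E s)
          = ((\<sigma>M1 + \<sigma>M1) - {#a, a#}) + ((\<sigma>M2 + \<sigma>M2) - {#b, b#}) + \<sigma>F4"
proof -
  interpret regular_P4_join V1 V2 V3 V4 E1 E2 E3 E4 d1 d2 s
    by unfold_locales (fact assms)+
  show ?thesis
    unfolding Let_def by (rule spec_deformed_laplacian_P4_join)
qed

end
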